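(* Let $k=\delta n$ with $\delta = \omega(\log^{-1/3} n)$, and let $G$ be a $k$-regular bipartite graph on $2n$ vertices. Let $Q$ be a monotone increasing property of subgraphs of $G$. If $Q$ holds a.a.s. for $G_H$, then, for almost every graph process in $G$, $Q$ holds for $G_{\tau_I}$, the first graph in the process in which there are no isolated vertices.
   Context: Set $p_1 = \frac{\log n - \log\log\log\log n}{k}$ and $p_2 = \frac{\log n + \log\log\log\log n}{k}$. For $p\in[0,1]$ and a graph $H$, $H(p)$ is the random subgraph of $H$ retaining each edge independently with probability $p$. Let $G_2\sim G(p_2)$ and $G_1 \sim G_2(p_1/p_2)$ (so $G_1\sim G(p_1)$ and $G_1\subseteq G_2$). $G_H$ is the random graph with $G_1\subseteq G_H\subseteq G_2$ obtained by adding to $G_1$, for each isolated vertex $v$ of $G_1$, an edge chosen uniformly at random from $\{e\in E(G_2): v\in e\}$; if any of these sets is empty, or if there are two vertices isolated in $G_1$ that are adjacent in $G_2$, set $G_H = G_1$. A graph process in $G=(V,E)$ is a sequence $(V,\emptyset)=G_0,\dots,G_{|E|}=G$ where each step adds one edge of $G$; "almost every graph process" means a.a.s. for a uniformly random graph process. "A.a.s." means with probability tending to $1$ as $n\to\infty$. *)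

theory Defs
  imports "HOL-Probability.Probability"
begin

text \<open>Graphs: vertex set a finite set of naturals, edges are 2-element sets of vertices.
  Spanning subgraphs of a host graph G are identified with their edge sets F \<subseteq> G.\<close>

definition bipartite_graph :: "nat set \<Rightarrow> nat set set \<Rightarrow> bool" where
  "bipartite_graph V E \<longleftrightarrow>
     (\<exists>A B. A \<union> B = V \<and> A \<inter> B = {} \<and> (\<forall>e\<in>E. \<exists>a\<in>A. \<exists>b\<in>B. e = {a, b}))"

definition regular_graph :: "nat \<Rightarrow> nat set \<Rightarrow> nat set set \<Rightarrow> bool" where
  "regular_graph k V E \<longleftrightarrow>
     (\<forall>e\<in>E. \<exists>u\<in>V. \<exists>v\<in>V. u \<noteq> v \<and> e = {u, v}) \<and> (\<forall>v\<in>V. card {e\<in>E. v \<in> e} = k)"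

definition isolated :: "nat set \<Rightarrow> nat set set \<Rightarrow> nat \<Rightarrow> bool" where
  "isolated V F v \<longleftrightarrow> v \<in> V \<and> (\<forall>e\<in>F. v \<notin> e)"

definition no_isolated :: "nat set \<Rightarrow> nat set set \<Rightarrow> bool" where
  "no_isolated V F \<longleftrightarrow> (\<forall>v\<in>V. \<not> isolated V F v)"

definition mono_increasing :: "nat set set \<Rightarrow> nat set set set \<Rightarrow> bool" where
  "mono_increasing G Q \<longleftrightarrow> Q \<subseteq> Pow G \<and> (\<forall>F F'. F \<in> Q \<longrightarrow> F \<subseteq> F' \<longrightarrow> F' \<subseteq> G \<longrightarrow> F' \<in> Q)"

definition random_subgraph :: "nat set set \<Rightarrow> real \<Rightarrow> nat set set pmf" where
  "random_subgraph E p = map_pmf (\<lambda>f. {e\<in>E. f e}) (Pi_pmf E False (\<lambda>_. bernoulli_pmf p))"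

text \<open>p1, p2 (log = natural logarithm).\<close>
definition p1 :: "nat \<Rightarrow> nat \<Rightarrow> real" where
  "p1 n k = (ln (real n) - ln (ln (ln (ln (real n))))) / real k"

definition p2 :: "nat \<Rightarrow> nat \<Rightarrow> real" where
  "p2 n k = (ln (real n) + ln (ln (ln (ln (real n))))) / real k"

definition GH_step :: "nat set \<Rightarrow> nat set set \<Rightarrow> nat set set \<Rightarrow> nat set set pmf" where
  "GH_step V G1 G2 =
     (let I = {v\<in>V. isolated V G1 v} in
      if (\<exists>v\<in>I. {e\<in>G2. v \<in> e} = {}) \<or> (\<exists>u\<in>I. \<exists>v\<in>I. {u, v} \<in> G2)
      then return_pmf G1
      else map_pmf (\<lambda>c. G1 \<union> c ` I) (Pi_pmf I {} (\<lambda>v. pmf_of_set {e\<in>G2. v \<in> e})))"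

definition GH :: "nat \<Rightarrow> nat \<Rightarrow> nat set \<Rightarrow> nat set set \<Rightarrow> nat set set pmf" where
  "GH n k V G =
     do { G2 \<leftarrow> random_subgraph G (p2 n k);
          G1 \<leftarrow> random_subgraph G2 (p1 n k / p2 n k);
          GH_step V G1 G2 }"

text \<open>Graph process: a uniformly random ordering of the edges; G_i = first i edges.
  tau_I = first i with no isolated vertex; hitting graph = G_{tau_I}.\<close>
definition hit_time :: "nat set \<Rightarrow> nat set list \<Rightarrow> nat" where
  "hit_time V xs = (LEAST i. no_isolated V (set (take i xs)))"

definition hitting_graph :: "nat set \<Rightarrow> nat set list \<Rightarrow> nat set set" where
  "hitting_graph V xs = set (take (hit_time V xs) xs)"

definition graph_process :: "nat set set \<Rightarrow> nat set list pmf" where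
  "graph_process E = pmf_of_set (permutations_of_set E)"

end

theory Submission
  imports Defs "HOL-Real_Asymp.Real_Asymp"
begin

text \<open>
  Couple \<open>G_H\<close> with the graph process. Draw \<open>G2\<close> and \<open>G1\<close> as in the definition of
  \<open>G_H\<close>, then list the edges of \<open>G1\<close>, those of \<open>G2 - G1\<close> and the remaining edges of
  \<open>G\<close>, each block in uniformly random order. The law of \<open>(G1, G2)\<close> is invariant under
  relabelling the edges of \<open>G\<close>, so the concatenation is a uniformly random graph process.
  Unless \<open>G_H = G1\<close>, no two isolated vertices of \<open>G1\<close> share an edge of \<open>G2\<close>, so the first
  edges at these vertices in the middle block are independent uniform choices: taking them
  realises \<open>G_H\<close>. While \<open>G1\<close> has an isolated vertex, all these edges come before the hitting
  time, so \<open>G_H\<close> is a subgraph of \<open>G_\<tau>\<close>. By monotonicity of \<open>Q\<close>,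
  \<open>P(G_H \<in> Q) \<le> P(G_\<tau> \<in> Q) + P(G1 has no isolated vertex)\<close>, and since one side of the
  bipartition consists of \<open>n\<close> vertices with disjoint stars, the last term is at most
  \<open>(1 - (1 - p1)^k)^n \<le> exp (- (log log log n) / e)\<close>.
\<close>

section \<open>Uniformly random orders\<close>

lemma pmf_map_inj_on:
  assumes "inj_on f B" "set_pmf M \<subseteq> B" "x \<in> B"
  shows "pmf (map_pmf f M) (f x) = pmf M x"
proof -
  have "f -` {f x} \<inter> set_pmf M = {x} \<inter> set_pmf M"
    using assms by (auto dest: inj_onD)
  then show ?thesis
    by (metis measure_Int_set_pmf measure_pmf_single pmf_map)
qed

lemma pmf_eq_pmf_of_setI:
  assumes S: "finite S" "S \<noteq> {}" and supp: "set_pmf \<mu> \<subseteq> S"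
    and transitive: "\<And>x y. x \<in> S \<Longrightarrow> y \<in> S \<Longrightarrow> \<exists>\<tau>. inj_on \<tau> S \<and> map_pmf \<tau> \<mu> = \<mu> \<and> \<tau> x = y"
  shows "\<mu> = pmf_of_set S"
proof -
  have const: "pmf \<mu> y = pmf \<mu> x" if xy: "x \<in> S" "y \<in> S" for x y
  proof -
    obtain \<tau> where \<tau>: "inj_on \<tau> S" "map_pmf \<tau> \<mu> = \<mu>" "\<tau> x = y"
      using transitive[OF xy] by blast
    have "pmf \<mu> y = pmf (map_pmf \<tau> \<mu>) (\<tau> x)" using \<tau> by simp
    also have "\<dots> = pmf \<mu> x" using \<tau>(1) supp xy(1) by (rule pmf_map_inj_on)
    finally show ?thesis .
  qed
  show ?thesis
  proof (rule pmf_eqI)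
    fix x
    show "pmf \<mu> x = pmf (pmf_of_set S) x"
    proof (cases "x \<in> S")
      case True
      have "1 = (\<Sum>y\<in>S. pmf \<mu> y)" using S supp by (intro sum_pmf_eq_1[symmetric])
      also have "\<dots> = real (card S) * pmf \<mu> x" using const[OF True] by simp
      finally show ?thesis using True S by (simp add: field_simps)
    next
      case False
      then have "x \<notin> set_pmf \<mu>" using supp by blast
      then show ?thesis using False S by (simp add: set_pmf_iff)
    qed
  qed
qed

definition random_perm :: "'a set \<Rightarrow> 'a list pmf" where
  "random_perm A = pmf_of_set (permutations_of_set A)"

lemma set_pmf_random_perm [simp]: "finite A \<Longrightarrow> set_pmf (random_perm A) = permutations_of_set A"
  unfolding random_perm_def by (simp add: permutations_of_set_nonempty)

lemma map_random_perm:
  assumes "finite A" "inj_on \<sigma> A"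
  shows "map_pmf (map \<sigma>) (random_perm A) = random_perm (\<sigma> ` A)"
proof -
  have "inj_on (map \<sigma>) (permutations_of_set A)"
    using assms(2) permutations_of_set_lists by (intro inj_on_mapI) (auto intro: inj_on_subset)
  then show ?thesis unfolding random_perm_def using assms
    by (subst map_pmf_of_set_inj) (auto simp: permutations_of_set_image_inj permutations_of_set_nonempty)
qed

lemma permutations_of_set_relabel:
  assumes xs: "xs \<in> permutations_of_set A" and ys: "ys \<in> permutations_of_set A"
  obtains \<sigma> where "bij_betw \<sigma> A A" "map \<sigma> xs = ys"
proof
  define \<sigma> where "\<sigma> = the \<circ> map_of (zip xs ys)"
  have dx: "distinct xs" "set xs = A" and dy: "distinct ys" "set ys = A"
    using xs ys by (auto dest: permutations_of_setD)
  have len: "length xs = length ys" using dx dy distinct_card by metis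
  show map: "map \<sigma> xs = ys"
    by (rule nth_equalityI) (simp_all add: len \<sigma>_def map_of_zip_nth dx(1))
  then show "bij_betw \<sigma> A A"
    using dx dy by (metis bij_betw_def distinct_map list.set_map)
qed

lemma random_perm_eqI:
  assumes "finite A" "set_pmf \<mu> \<subseteq> permutations_of_set A"
    and invariant: "\<And>\<sigma>. bij_betw \<sigma> A A \<Longrightarrow> map_pmf (map \<sigma>) \<mu> = \<mu>"
  shows "\<mu> = random_perm A"
  unfolding random_perm_def
proof (rule pmf_eq_pmf_of_setI)
  show "finite (permutations_of_set A)" "permutations_of_set A \<noteq> {}"
    using assms(1) by (auto simp: permutations_of_set_nonempty)
  fix xs ys assume xs: "xs \<in> permutations_of_set A" and ys: "ys \<in> permutations_of_set A"
  then obtain \<sigma> where \<sigma>: "bij_betw \<sigma> A A" "map \<sigma> xs = ys" by (rule permutations_of_set_relabel)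
  have "inj_on (map \<sigma>) (permutations_of_set A)"
    using \<sigma>(1) permutations_of_set_lists
    by (intro inj_on_mapI) (auto simp: bij_betw_def intro: inj_on_subset)
  then show "\<exists>\<tau>. inj_on \<tau> (permutations_of_set A) \<and> map_pmf \<tau> \<mu> = \<mu> \<and> \<tau> xs = ys"
    using \<sigma> invariant by blast
qed (fact assms(2))

definition block_perm :: "'a set \<Rightarrow> 'a set \<Rightarrow> 'a set \<Rightarrow> 'a list pmf" where
  "block_perm E H1 H2 =
     do { a \<leftarrow> random_perm H1; b \<leftarrow> random_perm (H2 - H1); c \<leftarrow> random_perm (E - H2);
          return_pmf (a @ b @ c) }"

lemma set_pmf_block_perm:
  assumes "finite E" "H1 \<subseteq> H2" "H2 \<subseteq> E"
  shows "set_pmf (block_perm E H1 H2) \<subseteq> permutations_of_set E"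
proof
  fix xs assume "xs \<in> set_pmf (block_perm E H1 H2)"
  moreover have "finite H1" "finite H2" using assms by (auto intro: finite_subset)
  ultimately obtain a b c where xs: "xs = a @ b @ c" and abc: "a \<in> permutations_of_set H1"
    "b \<in> permutations_of_set (H2 - H1)" "c \<in> permutations_of_set (E - H2)"
    using assms(1) by (auto simp: block_perm_def)
  then have "set a = H1" "set b = H2 - H1" "set c = E - H2" "distinct a" "distinct b" "distinct c"
    unfolding permutations_of_set_def by simp_all
  then show "xs \<in> permutations_of_set E"
    unfolding xs using assms(2,3) by (intro permutations_of_setI) auto
qed

lemma map_block_perm:
  assumes "finite E" "bij_betw \<sigma> E E" "H1 \<subseteq> H2" "H2 \<subseteq> E"
  shows "map_pmf (map \<sigma>) (block_perm E H1 H2) = block_perm E (\<sigma> ` H1) (\<sigma> ` H2)"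
proof -
  have inj: "inj_on \<sigma> E" using assms(2) by (simp add: bij_betw_def)
  have fin: "finite H1" "finite (H2 - H1)" "finite (E - H2)"
    using assms by (auto intro: finite_subset)
  have injs: "inj_on \<sigma> H1" "inj_on \<sigma> (H2 - H1)" "inj_on \<sigma> (E - H2)"
    using assms by (auto intro!: inj_on_subset[OF inj])
  have "map_pmf (map \<sigma>) (block_perm E H1 H2) =
     do { a \<leftarrow> map_pmf (map \<sigma>) (random_perm H1); b \<leftarrow> map_pmf (map \<sigma>) (random_perm (H2 - H1));
          c \<leftarrow> map_pmf (map \<sigma>) (random_perm (E - H2)); return_pmf (a @ b @ c) }"
    unfolding block_perm_def by (simp add: map_bind_pmf bind_map_pmf)
  also have "\<dots> = do { a \<leftarrow> random_perm (\<sigma> ` H1); b \<leftarrow> random_perm (\<sigma> ` (H2 - H1));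
          c \<leftarrow> random_perm (\<sigma> ` (E - H2)); return_pmf (a @ b @ c) }"
    by (simp add: map_random_perm fin injs)
  also have "\<sigma> ` (H2 - H1) = \<sigma> ` H2 - \<sigma> ` H1"
    using assms by (intro inj_on_image_set_diff[OF inj]) auto
  also have "\<sigma> ` (E - H2) = \<sigma> ` E - \<sigma> ` H2"
    using assms by (intro inj_on_image_set_diff[OF inj]) auto
  also have "\<sigma> ` E = E" using assms(2) by (simp add: bij_betw_def)
  finally show ?thesis unfolding block_perm_def .
qed

lemma bind_block_perm_eq_random_perm:
  assumes fin: "finite E" and supp: "\<And>H1 H2. (H1, H2) \<in> set_pmf \<nu> \<Longrightarrow> H1 \<subseteq> H2 \<and> H2 \<subseteq> E"
    and invariant: "\<And>\<sigma>. bij_betw \<sigma> E E \<Longrightarrow> map_pmf (\<lambda>(H1, H2). (\<sigma> ` H1, \<sigma> ` H2)) \<nu> = \<nu>"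
  shows "bind_pmf \<nu> (\<lambda>(H1, H2). block_perm E H1 H2) = random_perm E"
proof (rule random_perm_eqI[OF fin])
  have "set_pmf (block_perm E (fst H) (snd H)) \<subseteq> permutations_of_set E" if "H \<in> set_pmf \<nu>" for H
    using supp[of "fst H" "snd H"] that by (intro set_pmf_block_perm[OF fin]) auto
  then show "set_pmf (bind_pmf \<nu> (\<lambda>(H1, H2). block_perm E H1 H2)) \<subseteq> permutations_of_set E"
    by (auto simp: set_bind_pmf split_beta)
  fix \<sigma> assume \<sigma>: "bij_betw \<sigma> E E"
  have "map_pmf (map \<sigma>) (bind_pmf \<nu> (\<lambda>(H1, H2). block_perm E H1 H2))
      = bind_pmf \<nu> (\<lambda>(H1, H2). block_perm E (\<sigma> ` H1) (\<sigma> ` H2))"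
    unfolding map_bind_pmf
  proof (intro bind_pmf_cong refl)
    fix H assume "H \<in> set_pmf \<nu>"
    then have "fst H \<subseteq> snd H" "snd H \<subseteq> E" using supp[of "fst H" "snd H"] by auto
    then show "map_pmf (map \<sigma>) (case H of (H1, H2) \<Rightarrow> block_perm E H1 H2)
        = (case H of (H1, H2) \<Rightarrow> block_perm E (\<sigma> ` H1) (\<sigma> ` H2))"
      by (simp add: split_beta map_block_perm[OF fin \<sigma>])
  qed
  also have "\<dots> = bind_pmf (map_pmf (\<lambda>(H1, H2). (\<sigma> ` H1, \<sigma> ` H2)) \<nu>) (\<lambda>(H1, H2). block_perm E H1 H2)"
    by (simp add: bind_map_pmf case_prod_unfold)
  also have "map_pmf (\<lambda>(H1, H2). (\<sigma> ` H1, \<sigma> ` H2)) \<nu> = \<nu>" by (rule invariant[OF \<sigma>])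
  finally show "map_pmf (map \<sigma>) (bind_pmf \<nu> (\<lambda>(H1, H2). block_perm E H1 H2))
      = bind_pmf \<nu> (\<lambda>(H1, H2). block_perm E H1 H2)" .
qed

lemma class_preserving_swap:
  fixes P :: "'v \<Rightarrow> 'e \<Rightarrow> bool"
  assumes disj: "\<And>u v e. u \<in> I \<Longrightarrow> v \<in> I \<Longrightarrow> e \<in> T \<Longrightarrow> P u e \<Longrightarrow> P v e \<Longrightarrow> u = v"
    and c: "\<And>v. v \<in> I \<Longrightarrow> c v \<in> T \<and> P v (c v)"
    and c': "\<And>v. v \<in> I \<Longrightarrow> c' v \<in> T \<and> P v (c' v)"
  obtains \<sigma> where "bij_betw \<sigma> T T" "\<And>v. v \<in> I \<Longrightarrow> \<sigma> (c v) = c' v"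
    "\<And>v e. v \<in> I \<Longrightarrow> e \<in> T \<Longrightarrow> P v (\<sigma> e) = P v e"
proof -
  define owner where "owner e = (THE v. v \<in> I \<and> P v e)" for e
  define \<sigma> where "\<sigma> e = (if e \<in> T \<and> (\<exists>v\<in>I. P v e)
    then Transposition.transpose (c (owner e)) (c' (owner e)) e else e)" for e
  have \<sigma>_class: "\<sigma> e = Transposition.transpose (c v) (c' v) e" if "v \<in> I" "e \<in> T" "P v e" for v e
  proof -
    have "owner e = v" unfolding owner_def using that disj by blast
    then show ?thesis using that by (auto simp: \<sigma>_def)
  qed
  have stays: "\<sigma> e \<in> T \<and> P v (\<sigma> e)" if "v \<in> I" "e \<in> T" "P v e" for v e
    using \<sigma>_class[OF that] c[OF that(1)] c'[OF that(1)] that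
    by (auto simp: Transposition.transpose_def)
  have \<sigma>_T: "\<sigma> e \<in> T \<and> \<sigma> (\<sigma> e) = e" if "e \<in> T" for e
  proof (cases "\<exists>v\<in>I. P v e")
    case True
    then obtain v where "v \<in> I" "P v e" by blast
    with that show ?thesis using stays \<sigma>_class by (metis transpose_involutory)
  next
    case False
    then show ?thesis using that by (simp add: \<sigma>_def)
  qed
  show ?thesis
  proof
    show "bij_betw \<sigma> T T" by (rule bij_betwI[where g = \<sigma>]) (auto simp: \<sigma>_T)
    show "\<sigma> (c v) = c' v" if "v \<in> I" for v
      using \<sigma>_class[of v "c v"] c[OF that] that by simp
    show "P v (\<sigma> e) = P v e" if "v \<in> I" "e \<in> T" for v e
    proof (cases "\<exists>u\<in>I. P u e")
      case True
      then obtain u where u: "u \<in> I" "P u e" by blast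
      then show ?thesis using stays[OF u(1) \<open>e \<in> T\<close> u(2)] disj that by metis
    qed (simp add: \<sigma>_def)
  qed
qed

definition first_in :: "'v set \<Rightarrow> ('v \<Rightarrow> 'e \<Rightarrow> bool) \<Rightarrow> 'e \<Rightarrow> 'e list \<Rightarrow> 'v \<Rightarrow> 'e" where
  "first_in I P d b v = (if v \<in> I then hd (filter (P v) b) else d)"

lemma first_in_mem:
  assumes "b \<in> permutations_of_set T" "v \<in> I" "\<exists>e\<in>T. P v e"
  shows "first_in I P d b v \<in> {e\<in>T. P v e}"
proof -
  have "filter (P v) b \<noteq> []"
    using assms by (auto simp: filter_empty_conv dest: permutations_of_setD)
  then have "hd (filter (P v) b) \<in> set (filter (P v) b)" by (rule hd_in_set)
  then show ?thesis
    using assms(1,2) by (auto simp: first_in_def dest: permutations_of_setD)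
qed

lemma map_first_in_relabel:
  assumes "finite T" "bij_betw \<sigma> T T" and preserves: "\<And>v e. v \<in> I \<Longrightarrow> e \<in> T \<Longrightarrow> P v (\<sigma> e) = P v e"
    and nonempty: "\<And>v. v \<in> I \<Longrightarrow> \<exists>e\<in>T. P v e"
  shows "map_pmf (\<lambda>f v. if v \<in> I then \<sigma> (f v) else d) (map_pmf (first_in I P d) (random_perm T))
    = map_pmf (first_in I P d) (random_perm T)"
proof -
  have "first_in I P d (map \<sigma> b) = (\<lambda>v. if v \<in> I then \<sigma> (first_in I P d b v) else d)"
    if b: "b \<in> permutations_of_set T" for b
  proof -
    have "filter (P v \<circ> \<sigma>) b = filter (P v) b" if "v \<in> I" for v
      using b preserves[OF that] by (intro filter_cong) (auto dest: permutations_of_setD)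
    moreover have "filter (P v) b \<noteq> []" if "v \<in> I" for v
      using b nonempty[OF that] by (auto simp: filter_empty_conv dest: permutations_of_setD)
    ultimately show ?thesis by (auto simp: first_in_def filter_map hd_map)
  qed
  then have "map_pmf (\<lambda>f v. if v \<in> I then \<sigma> (f v) else d) (map_pmf (first_in I P d) (random_perm T))
      = map_pmf (first_in I P d) (map_pmf (map \<sigma>) (random_perm T))"
    unfolding pmf.map_comp using assms(1) by (intro map_pmf_cong) auto
  also have "map_pmf (map \<sigma>) (random_perm T) = random_perm T"
    using map_random_perm[OF assms(1), of \<sigma>] assms(2) by (simp add: bij_betw_def)
  finally show ?thesis .
qed

text \<open>By symmetry: a bijection of \<open>T\<close> preserving the classes moves any choice of
  representatives to any other.\<close>

lemma map_first_in_random_perm: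
  fixes P :: "'v \<Rightarrow> 'e \<Rightarrow> bool"
  assumes fin: "finite T" "finite I"
    and nonempty: "\<And>v. v \<in> I \<Longrightarrow> \<exists>e\<in>T. P v e"
    and disj: "\<And>u v e. u \<in> I \<Longrightarrow> v \<in> I \<Longrightarrow> e \<in> T \<Longrightarrow> P u e \<Longrightarrow> P v e \<Longrightarrow> u = v"
  shows "map_pmf (first_in I P d) (random_perm T) = Pi_pmf I d (\<lambda>v. pmf_of_set {e\<in>T. P v e})"
proof -
  define S where "S v = {e\<in>T. P v e}" for v
  have S: "finite (S v)" "S v \<noteq> {}" if "v \<in> I" for v
    using nonempty[OF that] fin by (auto simp: S_def)
  have "map_pmf (first_in I P d) (random_perm T) = pmf_of_set (PiE_dflt I d S)"
  proof (rule pmf_eq_pmf_of_setI)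
    show "finite (PiE_dflt I d S)" "PiE_dflt I d S \<noteq> {}"
      using fin S by (auto intro: finite_PiE_dflt)
    show "set_pmf (map_pmf (first_in I P d) (random_perm T)) \<subseteq> PiE_dflt I d S"
    proof
      fix f assume "f \<in> set_pmf (map_pmf (first_in I P d) (random_perm T))"
      then obtain b where b: "b \<in> permutations_of_set T" "f = first_in I P d b" using fin(1) by auto
      have "f v \<in> S v" if "v \<in> I" for v
        using first_in_mem[where P = P and d = d, OF b(1) that nonempty[OF that]] b(2) by (simp add: S_def)
      moreover have "f v = d" if "v \<notin> I" for v
        using b(2) that by (simp add: first_in_def)
      ultimately show "f \<in> PiE_dflt I d S" by (auto simp: PiE_dflt_def)
    qed
    fix c c' assume c: "c \<in> PiE_dflt I d S" and c': "c' \<in> PiE_dflt I d S"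
    obtain \<sigma> where \<sigma>: "bij_betw \<sigma> T T" "\<And>v. v \<in> I \<Longrightarrow> \<sigma> (c v) = c' v"
      "\<And>v e. v \<in> I \<Longrightarrow> e \<in> T \<Longrightarrow> P v (\<sigma> e) = P v e"
      using class_preserving_swap[of I T P c c'] disj c c' by (auto simp: PiE_dflt_def S_def)
    define \<tau> where "\<tau> f v = (if v \<in> I then \<sigma> (f v) else d)" for f v
    have "inj_on \<tau> (PiE_dflt I d S)"
      using \<sigma>(1) by (auto simp: inj_on_def \<tau>_def PiE_dflt_def S_def fun_eq_iff bij_betw_def) metis
    moreover have "\<tau> c = c'"
      using c' \<sigma>(2) by (auto simp: \<tau>_def PiE_dflt_def)
    moreover have "map_pmf \<tau> (map_pmf (first_in I P d) (random_perm T)) = map_pmf (first_in I P d) (random_perm T)"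
      unfolding \<tau>_def using fin(1) \<sigma>(1,3) nonempty by (rule map_first_in_relabel)
    ultimately show "\<exists>\<tau>. inj_on \<tau> (PiE_dflt I d S) \<and> map_pmf \<tau> (map_pmf (first_in I P d) (random_perm T))
        = map_pmf (first_in I P d) (random_perm T) \<and> \<tau> c = c'" by blast
  qed
  also have "\<dots> = Pi_pmf I d (\<lambda>v. pmf_of_set (S v))"
    using fin S by (intro Pi_pmf_of_set[symmetric]) auto
  finally show ?thesis unfolding S_def .
qed

section \<open>Random subgraphs\<close>

lemma set_pmf_random_subgraph: "set_pmf (random_subgraph A p) \<subseteq> Pow A"
  unfolding random_subgraph_def by auto

lemma pmf_random_subgraph:
  assumes "finite A" "0 \<le> p" "p \<le> 1" "S \<subseteq> A"
  shows "pmf (random_subgraph A p) S = p ^ card S * (1 - p) ^ card (A - S)"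
proof -
  let ?B = "{f. \<forall>x. x \<notin> A \<longrightarrow> f x = False}"
  have inj: "inj_on (\<lambda>f. {e\<in>A. f e}) ?B" by (auto simp: inj_on_def fun_eq_iff)
  have S: "S = {e\<in>A. e \<in> S}" "(\<lambda>e. e \<in> S) \<in> ?B" using assms(4) by auto
  have "pmf (random_subgraph A p) S = pmf (Pi_pmf A False (\<lambda>_. bernoulli_pmf p)) (\<lambda>e. e \<in> S)"
    unfolding random_subgraph_def
    by (subst S(1), rule pmf_map_inj_on[OF inj set_Pi_pmf_subset[OF assms(1)] S(2)])
  also have "\<dots> = (\<Prod>e\<in>A. if e \<in> S then p else 1 - p)"
    using assms by (subst pmf_Pi) (auto intro: prod.cong)
  also have "\<dots> = p ^ card S * (1 - p) ^ card (A - S)"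
    using assms(1,4) by (subst prod.If_cases) (auto simp: Int_absorb1 Diff_eq[symmetric] Int_commute)
  finally show ?thesis .
qed

lemma map_random_subgraph:
  assumes "finite A" "inj_on h A" "0 \<le> p" "p \<le> 1"
  shows "map_pmf (image h) (random_subgraph A p) = random_subgraph (h ` A) p"
proof (rule pmf_eqI)
  fix S
  show "pmf (map_pmf (image h) (random_subgraph A p)) S = pmf (random_subgraph (h ` A) p) S"
  proof (cases "S \<subseteq> h ` A")
    case True
    define S' where "S' = A \<inter> h -` S"
    have S: "S = h ` S'" "S' \<subseteq> A" using True by (auto simp: S'_def)
    have inj: "inj_on h S'" "inj_on h (A - S')" using assms(2) by (auto simp: S'_def intro: inj_on_subset)
    have "pmf (map_pmf (image h) (random_subgraph A p)) S = pmf (random_subgraph A p) S'"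
      unfolding S(1)
      by (rule pmf_map_inj_on[OF inj_on_image_Pow[OF assms(2)] set_pmf_random_subgraph]) (use S in auto)
    also have "\<dots> = p ^ card (h ` S') * (1 - p) ^ card (h ` (A - S'))"
      using assms S by (simp add: pmf_random_subgraph card_image inj)
    also have "h ` (A - S') = h ` A - S"
      unfolding S(1) using S(2) by (intro inj_on_image_set_diff[OF assms(2)]) auto
    finally show ?thesis using True assms by (simp add: pmf_random_subgraph S(1))
  next
    case False
    then have "S \<notin> set_pmf (map_pmf (image h) (random_subgraph A p))"
      "S \<notin> set_pmf (random_subgraph (h ` A) p)"
      using set_pmf_random_subgraph by fastforce+
    then show ?thesis by (metis set_pmf_iff)
  qed
qed

lemma bind_bernoulli_pmf_thin:
  assumes "0 \<le> p" "p \<le> 1" "0 \<le> r" "r \<le> 1"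
  shows "bind_pmf (bernoulli_pmf p) (\<lambda>b. if b then bernoulli_pmf r else return_pmf False)
    = bernoulli_pmf (p * r)"
proof (rule pmf_eqI)
  fix x :: bool
  have "p * r \<le> 1" using assms by (auto intro: mult_le_one)
  then show "pmf (bind_pmf (bernoulli_pmf p) (\<lambda>b. if b then bernoulli_pmf r else return_pmf False)) x
      = pmf (bernoulli_pmf (p * r)) x"
    using assms by (cases x) (simp_all add: pmf_bind algebra_simps)
qed

lemma bind_random_subgraph:
  assumes fin: "finite E" and pr: "0 \<le> p" "p \<le> 1" "0 \<le> r" "r \<le> 1"
  shows "bind_pmf (random_subgraph E p) (\<lambda>H. random_subgraph H r) = random_subgraph E (p * r)"
proof -
  define thin where "thin b = (if b then bernoulli_pmf r else return_pmf False)" for b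
  define sel where "sel g = {e\<in>E. g e}" for g :: "nat set \<Rightarrow> bool"
  have "random_subgraph (sel f) r = map_pmf sel (Pi_pmf E False (\<lambda>e. thin (f e)))" for f
  proof -
    have "Pi_pmf (sel f) False (\<lambda>_. bernoulli_pmf r) = Pi_pmf E False (\<lambda>e. thin (f e))"
      unfolding thin_def sel_def using fin by (subst Pi_pmf_if_set[symmetric]) (auto intro: Pi_pmf_cong)
    moreover have "{e\<in>sel f. g e} = sel g" if "g \<in> set_pmf (Pi_pmf E False (\<lambda>e. thin (f e)))" for g
    proof -
      have "g e \<Longrightarrow> f e" for e
        using set_Pi_pmf_subset'[OF fin] that by (cases "e \<in> E") (force simp: PiE_dflt_def thin_def)+
      then show ?thesis by (auto simp: sel_def)
    qed
    ultimately show ?thesis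
      unfolding random_subgraph_def by (auto intro: map_pmf_cong)
  qed
  then have "bind_pmf (random_subgraph E p) (\<lambda>H. random_subgraph H r)
      = map_pmf sel (bind_pmf (Pi_pmf E False (\<lambda>_. bernoulli_pmf p)) (\<lambda>f. Pi_pmf E False (\<lambda>e. thin (f e))))"
    unfolding random_subgraph_def[of E] sel_def[symmetric] by (simp add: bind_map_pmf map_bind_pmf)
  also have "\<dots> = map_pmf sel (Pi_pmf E False (\<lambda>_. bind_pmf (bernoulli_pmf p) thin))"
    by (subst Pi_pmf_bind[OF fin]) (rule refl)
  also have "bind_pmf (bernoulli_pmf p) thin = bernoulli_pmf (p * r)"
    unfolding thin_def using pr by (rule bind_bernoulli_pmf_thin)
  finally show ?thesis unfolding random_subgraph_def sel_def .
qed

lemma measure_pair_pmf_times: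
  "measure_pmf.prob (pair_pmf M N) (A \<times> B) = measure_pmf.prob M A * measure_pmf.prob N B"
proof -
  have "(A \<times> B) \<inter> set_pmf (pair_pmf M N) = (A \<inter> set_pmf M) \<times> (B \<inter> set_pmf N)" by auto
  then have "measure_pmf.prob (pair_pmf M N) (A \<times> B)
      = measure_pmf.prob (pair_pmf M N) ((A \<inter> set_pmf M) \<times> (B \<inter> set_pmf N))"
    by (metis measure_Int_set_pmf)
  also have "\<dots> = measure_pmf.prob M (A \<inter> set_pmf M) * measure_pmf.prob N (B \<inter> set_pmf N)"
    by (rule measure_pmf_prob_product) auto
  finally show ?thesis by (simp add: measure_Int_set_pmf)
qed

lemma prob_Pi_bernoulli_ex:
  assumes "finite U" "0 \<le> p" "p \<le> 1"
  shows "measure_pmf.prob (Pi_pmf U False (\<lambda>_. bernoulli_pmf p)) {f. \<exists>e\<in>U. f e} = 1 - (1 - p) ^ card U"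
proof -
  have "{f. \<exists>e\<in>U. f e} = UNIV - Pi U (\<lambda>_. {False})" by auto
  then have "measure_pmf.prob (Pi_pmf U False (\<lambda>_. bernoulli_pmf p)) {f. \<exists>e\<in>U. f e}
      = 1 - measure_pmf.prob (Pi_pmf U False (\<lambda>_. bernoulli_pmf p)) (Pi U (\<lambda>_. {False}))"
    using measure_pmf.prob_compl[of "Pi U (\<lambda>_. {False})" "Pi_pmf U False (\<lambda>_. bernoulli_pmf p)"] by simp
  also have "\<dots> = 1 - (\<Prod>x\<in>U. measure_pmf.prob (bernoulli_pmf p) {False})"
    by (simp add: measure_Pi_pmf_Pi[OF assms(1)])
  finally show ?thesis using assms by (simp add: measure_pmf_single)
qed

lemma prob_Pi_bernoulli_hits_disjoint:
  fixes S :: "'c \<Rightarrow> 'a set"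
  assumes "finite C" "0 \<le> p" "p \<le> 1"
  shows "finite E \<Longrightarrow> (\<And>c. c \<in> C \<Longrightarrow> S c \<subseteq> E) \<Longrightarrow>
    (\<And>c c'. c \<in> C \<Longrightarrow> c' \<in> C \<Longrightarrow> c \<noteq> c' \<Longrightarrow> S c \<inter> S c' = {}) \<Longrightarrow>
    measure_pmf.prob (Pi_pmf E False (\<lambda>_. bernoulli_pmf p)) {f. \<forall>c\<in>C. \<exists>e\<in>S c. f e}
      = (\<Prod>c\<in>C. 1 - (1 - p) ^ card (S c))"
  using assms(1)
proof (induction C arbitrary: E rule: finite_induct)
  case (insert c C E)
  define W where "W = E - S c"
  have fin: "finite (S c)" "finite W" using insert.prems(1,2) by (auto simp: W_def intro: finite_subset)
  have E: "E = S c \<union> W" using insert.prems(2) by (auto simp: W_def)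
  have SW: "S c' \<subseteq> W" if "c' \<in> C" for c'
    using insert.prems(2,3)[of c'] insert.prems(3)[of c c'] that insert.hyps(2) by (auto simp: W_def)
  define merge where "merge = (\<lambda>(f :: 'a \<Rightarrow> bool, g) x. if x \<in> S c then f x else g x)"
  have "Pi_pmf E False (\<lambda>_. bernoulli_pmf p) = map_pmf merge
      (pair_pmf (Pi_pmf (S c) False (\<lambda>_. bernoulli_pmf p)) (Pi_pmf W False (\<lambda>_. bernoulli_pmf p)))"
    unfolding E merge_def by (rule Pi_pmf_union[OF fin]) (auto simp: W_def)
  moreover have "merge -` {f. \<forall>c\<in>insert c C. \<exists>e\<in>S c. f e}
      = {f. \<exists>e\<in>S c. f e} \<times> {g. \<forall>c\<in>C. \<exists>e\<in>S c. g e}"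
    using SW by (fastforce simp: merge_def W_def)
  ultimately have "measure_pmf.prob (Pi_pmf E False (\<lambda>_. bernoulli_pmf p)) {f. \<forall>c\<in>insert c C. \<exists>e\<in>S c. f e}
      = (1 - (1 - p) ^ card (S c)) * (\<Prod>c\<in>C. 1 - (1 - p) ^ card (S c))"
    using prob_Pi_bernoulli_ex[OF fin(1) assms(2,3)] insert.IH[OF fin(2) SW] insert.prems(3)
    by (simp add: measure_pair_pmf_times)
  then show ?case using insert.hyps by simp
qed simp

lemma prob_random_subgraph_no_isolated_le:
  assumes "finite E" "0 \<le> p" "p \<le> 1" "finite C" "C \<subseteq> V"
    and deg: "\<And>c. c \<in> C \<Longrightarrow> card {e\<in>E. c \<in> e} = k"
    and indep: "\<And>c c' e. c \<in> C \<Longrightarrow> c' \<in> C \<Longrightarrow> e \<in> E \<Longrightarrow> c \<in> e \<Longrightarrow> c' \<in> e \<Longrightarrow> c = c'"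
  shows "measure_pmf.prob (random_subgraph E p) {H. no_isolated V H} \<le> (1 - (1 - p) ^ k) ^ card C"
proof -
  have "measure_pmf.prob (random_subgraph E p) {H. no_isolated V H}
      \<le> measure_pmf.prob (Pi_pmf E False (\<lambda>_. bernoulli_pmf p)) {f. \<forall>c\<in>C. \<exists>e\<in>{e\<in>E. c \<in> e}. f e}"
    unfolding random_subgraph_def using assms(5)
    by (auto intro!: measure_pmf.finite_measure_mono simp: no_isolated_def isolated_def)
  also have "\<dots> = (\<Prod>c\<in>C. 1 - (1 - p) ^ card {e\<in>E. c \<in> e})"
    using indep by (intro prob_Pi_bernoulli_hits_disjoint[OF assms(4,2,3,1)]) auto
  also have "\<dots> = (1 - (1 - p) ^ k) ^ card C"
    using deg by simp
  finally show ?thesis .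
qed

section \<open>The coupling of \<open>G_H\<close> with the graph process\<close>

definition nested_random_subgraphs :: "nat set set \<Rightarrow> real \<Rightarrow> real \<Rightarrow> (nat set set \<times> nat set set) pmf" where
  "nested_random_subgraphs E p r =
     do { H2 \<leftarrow> random_subgraph E p; H1 \<leftarrow> random_subgraph H2 r; return_pmf (H1, H2) }"

lemma set_pmf_nested_random_subgraphs:
  "(H1, H2) \<in> set_pmf (nested_random_subgraphs E p r) \<Longrightarrow> H1 \<subseteq> H2 \<and> H2 \<subseteq> E"
  unfolding nested_random_subgraphs_def using set_pmf_random_subgraph by auto

lemma map_fst_nested_random_subgraphs:
  assumes "finite E" "0 \<le> p" "p \<le> 1" "0 \<le> r" "r \<le> 1"
  shows "map_pmf fst (nested_random_subgraphs E p r) = random_subgraph E (p * r)"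
  unfolding nested_random_subgraphs_def using bind_random_subgraph[OF assms]
  by (simp add: map_bind_pmf bind_return_pmf')

lemma map_nested_random_subgraphs:
  assumes "finite E" "bij_betw \<sigma> E E" "0 \<le> p" "p \<le> 1" "0 \<le> r" "r \<le> 1"
  shows "map_pmf (\<lambda>(H1, H2). (\<sigma> ` H1, \<sigma> ` H2)) (nested_random_subgraphs E p r)
    = nested_random_subgraphs E p r"
proof -
  have inj: "inj_on \<sigma> E" and img: "\<sigma> ` E = E" using assms(2) by (auto simp: bij_betw_def)
  have "map_pmf (\<lambda>(H1, H2). (\<sigma> ` H1, \<sigma> ` H2)) (nested_random_subgraphs E p r)
      = do { H2 \<leftarrow> random_subgraph E p; H1 \<leftarrow> map_pmf (image \<sigma>) (random_subgraph H2 r);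
             return_pmf (H1, \<sigma> ` H2) }"
    unfolding nested_random_subgraphs_def by (simp add: map_bind_pmf bind_map_pmf)
  also have "\<dots> = do { H2 \<leftarrow> random_subgraph E p; H1 \<leftarrow> random_subgraph (\<sigma> ` H2) r;
             return_pmf (H1, \<sigma> ` H2) }"
  proof (intro bind_pmf_cong refl)
    fix H2 assume "H2 \<in> set_pmf (random_subgraph E p)"
    then have "H2 \<subseteq> E" using set_pmf_random_subgraph by blast
    then show "map_pmf (image \<sigma>) (random_subgraph H2 r) = random_subgraph (\<sigma> ` H2) r"
      using assms(1,5,6) inj by (intro map_random_subgraph) (auto intro: finite_subset inj_on_subset)
  qed
  also have "\<dots> = do { H2 \<leftarrow> map_pmf (image \<sigma>) (random_subgraph E p); H1 \<leftarrow> random_subgraph H2 r;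
             return_pmf (H1, H2) }"
    by (simp add: bind_map_pmf)
  also have "map_pmf (image \<sigma>) (random_subgraph E p) = random_subgraph E p"
    using map_random_subgraph[OF assms(1) inj assms(3,4)] img by simp
  finally show ?thesis unfolding nested_random_subgraphs_def .
qed

definition GH_from_order :: "nat set \<Rightarrow> nat set set \<Rightarrow> nat set set \<Rightarrow> nat set list \<Rightarrow> nat set set" where
  "GH_from_order V G1 G2 b =
     (let I = {v\<in>V. isolated V G1 v} in
      if (\<exists>v\<in>I. {e\<in>G2. v \<in> e} = {}) \<or> (\<exists>u\<in>I. \<exists>v\<in>I. {u, v} \<in> G2)
      then G1
      else G1 \<union> (\<lambda>v. hd (filter (\<lambda>e. v \<in> e) b)) ` I)"

lemma GH_step_eq_map_random_perm:
  assumes "finite V" "finite G2" "G1 \<subseteq> G2" and edges: "\<forall>e\<in>G2. \<exists>x y. e = {x, y}"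
  shows "GH_step V G1 G2 = map_pmf (GH_from_order V G1 G2) (random_perm (G2 - G1))"
proof -
  define I where "I = {v\<in>V. isolated V G1 v}"
  show ?thesis
  proof (cases "(\<exists>v\<in>I. {e\<in>G2. v \<in> e} = {}) \<or> (\<exists>u\<in>I. \<exists>v\<in>I. {u, v} \<in> G2)")
    case True
    then show ?thesis unfolding GH_step_def GH_from_order_def I_def[symmetric] Let_def
      by (simp add: map_pmf_def bind_return_pmf)
  next
    case False
    have star: "{e\<in>G2. v \<in> e} = {e\<in>G2 - G1. v \<in> e}" if "v \<in> I" for v
      using that by (auto simp: I_def isolated_def)
    have disj: "u = v" if "u \<in> I" "v \<in> I" "e \<in> G2 - G1" "u \<in> e" "v \<in> e" for u v e
      using False that edges by fastforce
    have "GH_step V G1 G2 = map_pmf (\<lambda>c. G1 \<union> c ` I) (Pi_pmf I {} (\<lambda>v. pmf_of_set {e\<in>G2. v \<in> e}))"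
      unfolding GH_step_def I_def[symmetric] Let_def by (rule if_not_P[OF False])
    also have "Pi_pmf I {} (\<lambda>v. pmf_of_set {e\<in>G2. v \<in> e}) = Pi_pmf I {} (\<lambda>v. pmf_of_set {e\<in>G2 - G1. v \<in> e})"
      using star by (intro Pi_pmf_cong) auto
    also have "Pi_pmf I {} (\<lambda>v. pmf_of_set {e\<in>G2 - G1. v \<in> e})
        = map_pmf (first_in I (\<lambda>v e. v \<in> e) {}) (random_perm (G2 - G1))"
      using assms(1,2) False star disj
      by (intro map_first_in_random_perm[symmetric]) (auto simp: I_def)
    also have "map_pmf (\<lambda>c. G1 \<union> c ` I) \<dots> = map_pmf (GH_from_order V G1 G2) (random_perm (G2 - G1))"
      unfolding pmf.map_comp using False
      by (intro map_pmf_cong refl) (auto simp: GH_from_order_def first_in_def I_def[symmetric] Let_def)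
    finally show ?thesis .
  qed
qed

type_synonym coupling_outcome = "nat set set \<times> nat set set \<times> nat set list \<times> nat set list \<times> nat set list"

definition GH_coupling :: "nat set set \<Rightarrow> real \<Rightarrow> real \<Rightarrow> coupling_outcome pmf" where
  "GH_coupling E p r = bind_pmf (nested_random_subgraphs E p r) (\<lambda>(G1, G2).
     do { a \<leftarrow> random_perm G1; b \<leftarrow> random_perm (G2 - G1); c \<leftarrow> random_perm (E - G2);
          return_pmf (G1, G2, a, b, c) })"

lemma set_pmf_GH_coupling:
  assumes "finite E" "(G1, G2, a, b, c) \<in> set_pmf (GH_coupling E p r)"
  shows "set a = G1" "set b = G2 - G1" "a @ b @ c \<in> permutations_of_set E"
proof -
  have nested: "(G1, G2) \<in> set_pmf (nested_random_subgraphs E p r)" and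
    abc: "a \<in> set_pmf (random_perm G1)" "b \<in> set_pmf (random_perm (G2 - G1))"
      "c \<in> set_pmf (random_perm (E - G2))"
    using assms(2) by (auto simp: GH_coupling_def)
  have sub: "G1 \<subseteq> G2" "G2 \<subseteq> E" using set_pmf_nested_random_subgraphs[OF nested] by auto
  have "a @ b @ c \<in> set_pmf (block_perm E G1 G2)"
    using abc unfolding block_perm_def by auto
  then show "a @ b @ c \<in> permutations_of_set E" using set_pmf_block_perm[OF assms(1) sub] by blast
  have "finite G1" "finite G2" using sub assms(1) by (auto intro: finite_subset)
  then show "set a = G1" "set b = G2 - G1" using abc by (auto dest: permutations_of_setD)
qed

lemma map_concat_GH_coupling:
  assumes "finite E" "0 \<le> p" "p \<le> 1" "0 \<le> r" "r \<le> 1"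
  shows "map_pmf (\<lambda>(G1, G2, a, b, c). a @ b @ c) (GH_coupling E p r) = graph_process E"
proof -
  have "map_pmf (\<lambda>(G1, G2, a, b, c). a @ b @ c) (GH_coupling E p r)
      = bind_pmf (nested_random_subgraphs E p r) (\<lambda>(G1, G2). block_perm E G1 G2)"
    unfolding GH_coupling_def block_perm_def by (simp add: map_bind_pmf case_prod_unfold)
  also have "\<dots> = random_perm E"
    using assms set_pmf_nested_random_subgraphs map_nested_random_subgraphs
    by (intro bind_block_perm_eq_random_perm) auto
  finally show ?thesis by (simp add: graph_process_def random_perm_def)
qed

lemma map_fst_GH_coupling:
  assumes "finite E" "0 \<le> p" "p \<le> 1" "0 \<le> r" "r \<le> 1"
  shows "map_pmf fst (GH_coupling E p r) = random_subgraph E (p * r)"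
proof -
  have "map_pmf fst (GH_coupling E p r) = map_pmf fst (nested_random_subgraphs E p r)"
    unfolding GH_coupling_def map_pmf_def[of fst "nested_random_subgraphs E p r"]
    by (simp add: map_bind_pmf case_prod_unfold bind_return_pmf')
  then show ?thesis using map_fst_nested_random_subgraphs[OF assms] by simp
qed

lemma GH_eq_map_GH_coupling:
  assumes "finite V" "finite E" "\<forall>e\<in>E. \<exists>x y. e = {x, y}"
  shows "GH n k V E = map_pmf (\<lambda>(G1, G2, a, b, c). GH_from_order V G1 G2 b)
    (GH_coupling E (p2 n k) (p1 n k / p2 n k))"
proof -
  have "GH n k V E = bind_pmf (nested_random_subgraphs E (p2 n k) (p1 n k / p2 n k))
      (\<lambda>(G1, G2). GH_step V G1 G2)"
    unfolding GH_def nested_random_subgraphs_def by (simp add: bind_assoc_pmf bind_return_pmf)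
  also have "\<dots> = bind_pmf (nested_random_subgraphs E (p2 n k) (p1 n k / p2 n k))
      (\<lambda>(G1, G2). map_pmf (GH_from_order V G1 G2) (random_perm (G2 - G1)))"
  proof (intro bind_pmf_cong refl)
    fix G assume "G \<in> set_pmf (nested_random_subgraphs E (p2 n k) (p1 n k / p2 n k))"
    then have "fst G \<subseteq> snd G" "snd G \<subseteq> E"
      using set_pmf_nested_random_subgraphs[of "fst G" "snd G"] by auto
    then show "(case G of (G1, G2) \<Rightarrow> GH_step V G1 G2)
        = (case G of (G1, G2) \<Rightarrow> map_pmf (GH_from_order V G1 G2) (random_perm (G2 - G1)))"
      using assms by (auto simp: split_beta intro!: GH_step_eq_map_random_perm intro: finite_subset)
  qed
  also have "\<dots> = map_pmf (\<lambda>(G1, G2, a, b, c). GH_from_order V G1 G2 b)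
      (GH_coupling E (p2 n k) (p1 n k / p2 n k))"
    unfolding GH_coupling_def map_pmf_def
    by (simp add: map_bind_pmf bind_assoc_pmf bind_return_pmf case_prod_unfold)
  finally show ?thesis .
qed

lemma no_isolated_take_hit_time:
  assumes "no_isolated V (set xs)"
  shows "no_isolated V (set (take (hit_time V xs) xs))"
  unfolding hit_time_def by (rule LeastI[of _ "length xs"]) (use assms in simp)

lemma less_hit_time_if_isolated:
  assumes "no_isolated V (set xs)" "isolated V (set (take m xs)) v"
  shows "m < hit_time V xs"
proof (rule ccontr)
  assume "\<not> m < hit_time V xs"
  then have "set (take (hit_time V xs) xs) \<subseteq> set (take m xs)"
    by (intro set_take_subset_set_take) simp
  then show False
    using no_isolated_take_hit_time[OF assms(1)] assms(2) by (auto simp: no_isolated_def isolated_def)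
qed

lemma set_take_subset_hitting_graph: "m \<le> hit_time V xs \<Longrightarrow> set (take m xs) \<subseteq> hitting_graph V xs"
  unfolding hitting_graph_def by (rule set_take_subset_set_take)

lemma hitting_graph_subset_set: "hitting_graph V xs \<subseteq> set xs"
  unfolding hitting_graph_def by (rule set_take_subset)

text \<open>While \<open>G1\<close> still has an isolated vertex, the process has not reached its hitting time
  when it adds, for any vertex isolated in \<open>G1\<close>, the first edge at that vertex.\<close>

lemma GH_from_order_subset_hitting_graph:
  assumes no_iso: "no_isolated V (set (a @ b @ c))" and ab: "set a = G1" "set b = G2 - G1"
    and "isolated V G1 w"
  shows "GH_from_order V G1 G2 b \<subseteq> hitting_graph V (a @ b @ c)"
proof -
  let ?xs = "a @ b @ c"
  have "length a < hit_time V ?xs"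
    using assms by (intro less_hit_time_if_isolated[of V ?xs _ w]) simp_all
  then have G1: "G1 \<subseteq> hitting_graph V ?xs"
    using set_take_subset_hitting_graph[of "length a" V ?xs] ab(1) by simp
  have first: "hd (filter (\<lambda>e. v \<in> e) b) \<in> hitting_graph V ?xs"
    if v: "isolated V G1 v" and "e0 \<in> G2" "v \<in> e0" for v e0
  proof -
    have "e0 \<in> set b" using that ab(2) by (auto simp: isolated_def)
    then obtain e ys where "filter (\<lambda>e. v \<in> e) b = e # ys"
      using \<open>v \<in> e0\<close> by (cases "filter (\<lambda>e. v \<in> e) b") (auto simp: filter_empty_conv)
    then obtain us vs where b: "b = us @ e # vs" "\<forall>u\<in>set us. v \<notin> u" "v \<in> e"
      and hd: "hd (filter (\<lambda>e. v \<in> e) b) = e"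
      by (auto simp: filter_eq_Cons_iff)
    have "length (a @ us) < hit_time V ?xs"
      using no_iso v ab(1) b by (intro less_hit_time_if_isolated[of V ?xs _ v]) (auto simp: isolated_def)
    then have "set (take (Suc (length (a @ us))) ?xs) \<subseteq> hitting_graph V ?xs"
      by (intro set_take_subset_hitting_graph) simp
    moreover have "take (Suc (length (a @ us))) ?xs = a @ us @ [e]" using b by simp
    ultimately have "set (a @ us @ [e]) \<subseteq> hitting_graph V ?xs" by (simp only:)
    then show ?thesis using hd by simp
  qed
  show ?thesis
    using G1 first by (auto simp: GH_from_order_def Let_def)
qed

lemma hitting_graph_mem_if_GH_from_order_mem:
  assumes "finite E" "no_isolated V E" "mono_increasing E Q"
    and "(G1, G2, a, b, c) \<in> set_pmf (GH_coupling E p r)" "GH_from_order V G1 G2 b \<in> Q"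
    and "isolated V G1 w"
  shows "hitting_graph V (a @ b @ c) \<in> Q"
proof -
  have G: "set a = G1" "set b = G2 - G1" "a @ b @ c \<in> permutations_of_set E"
    using set_pmf_GH_coupling[OF assms(1,4)] by auto
  then have "GH_from_order V G1 G2 b \<subseteq> hitting_graph V (a @ b @ c)"
    using assms(2,6) by (intro GH_from_order_subset_hitting_graph) (auto dest: permutations_of_setD)
  moreover have "hitting_graph V (a @ b @ c) \<subseteq> E"
    using hitting_graph_subset_set permutations_of_setD(1)[OF G(3)] by blast
  ultimately show ?thesis using assms(3,5) by (auto simp: mono_increasing_def)
qed

lemma prob_GH_le_prob_hitting_graph:
  assumes fin: "finite V" "finite E" and edges: "\<forall>e\<in>E. \<exists>x y. e = {x, y}"
    and no_iso: "no_isolated V E" and mono: "mono_increasing E Q"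
    and p: "0 \<le> p1 n k" "p1 n k \<le> p2 n k" "0 < p2 n k" "p2 n k \<le> 1"
  shows "measure_pmf.prob (GH n k V E) Q
    \<le> measure_pmf.prob (graph_process E) {xs. hitting_graph V xs \<in> Q}
      + measure_pmf.prob (random_subgraph E (p1 n k)) {H. no_isolated V H}"
proof -
  define \<Omega> where "\<Omega> = GH_coupling E (p2 n k) (p1 n k / p2 n k)"
  define GH_event where "GH_event = ((\<lambda>(G1, G2, a, b, c). GH_from_order V G1 G2 b) -` Q :: coupling_outcome set)"
  define hit_event where "hit_event = ((\<lambda>(G1, G2, a, b, c). a @ b @ c) -` {xs. hitting_graph V xs \<in> Q} :: coupling_outcome set)"
  define full_event where "full_event = (fst -` {H. no_isolated V H} :: coupling_outcome set)"
  have r: "0 \<le> p2 n k" "0 \<le> p1 n k / p2 n k" "p1 n k / p2 n k \<le> 1" and pr: "p2 n k * (p1 n k / p2 n k) = p1 n k"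
    using p by auto
  have "GH_event \<inter> set_pmf \<Omega> \<subseteq> hit_event \<union> full_event"
  proof clarify
    fix G1 G2 a b c assume "(G1, G2, a, b, c) \<in> GH_event" "(G1, G2, a, b, c) \<in> set_pmf \<Omega>"
      "(G1, G2, a, b, c) \<notin> full_event"
    then show "(G1, G2, a, b, c) \<in> hit_event"
      using hitting_graph_mem_if_GH_from_order_mem[OF fin(2) no_iso mono]
      by (auto simp: \<Omega>_def GH_event_def hit_event_def full_event_def no_isolated_def)
  qed
  then have "measure_pmf.prob \<Omega> GH_event \<le> measure_pmf.prob \<Omega> (hit_event \<union> full_event)"
    by (metis measure_Int_set_pmf measure_pmf.finite_measure_mono sets_measure_pmf UNIV_I)
  also have "\<dots> \<le> measure_pmf.prob \<Omega> hit_event + measure_pmf.prob \<Omega> full_event"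
    by (rule measure_Un_le) simp_all
  also have "measure_pmf.prob \<Omega> GH_event = measure_pmf.prob (GH n k V E) Q"
    unfolding GH_event_def \<Omega>_def GH_eq_map_GH_coupling[OF fin edges] by (rule measure_map_pmf[symmetric])
  also have "measure_pmf.prob \<Omega> hit_event = measure_pmf.prob (graph_process E) {xs. hitting_graph V xs \<in> Q}"
    unfolding hit_event_def \<Omega>_def map_concat_GH_coupling[OF fin(2) r(1) p(4) r(2,3), symmetric]
    by (rule measure_map_pmf[symmetric])
  also have "measure_pmf.prob \<Omega> full_event = measure_pmf.prob (random_subgraph E (p1 n k)) {H. no_isolated V H}"
    unfolding full_event_def \<Omega>_def map_fst_GH_coupling[OF fin(2) r(1) p(4) r(2,3), unfolded pr, symmetric]
    by (rule measure_map_pmf[symmetric])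
  finally show ?thesis .
qed

section \<open>Regular bipartite graphs\<close>

lemma regular_graph_edges:
  assumes "regular_graph k V E"
  shows "E \<subseteq> Pow V" "\<forall>e\<in>E. \<exists>x y. e = {x, y}"
  using assms unfolding regular_graph_def by fastforce+

lemma no_isolated_if_regular:
  assumes "regular_graph k V E" "0 < k"
  shows "no_isolated V E"
proof -
  have "{e\<in>E. v \<in> e} \<noteq> {}" if "v \<in> V" for v
  proof -
    have "card {e\<in>E. v \<in> e} = k" using assms(1) that by (simp add: regular_graph_def)
    then show ?thesis using assms(2) by (intro notI) simp
  qed
  then show ?thesis by (auto simp: no_isolated_def isolated_def)
qed

lemma bipartite_graph_large_side:
  assumes "bipartite_graph V E" "finite V"
  obtains C where "C \<subseteq> V" "card V \<le> 2 * card C"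
    "\<And>c c' e. c \<in> C \<Longrightarrow> c' \<in> C \<Longrightarrow> e \<in> E \<Longrightarrow> c \<in> e \<Longrightarrow> c' \<in> e \<Longrightarrow> c = c'"
proof -
  obtain A B where AB: "A \<union> B = V" "A \<inter> B = {}" "\<forall>e\<in>E. \<exists>a\<in>A. \<exists>b\<in>B. e = {a, b}"
    using assms(1) by (auto simp: bipartite_graph_def)
  have card: "card V = card A + card B"
    using AB(1,2) assms(2) by (metis card_Un_disjoint finite_Un)
  have indep: "c = c'" if "C = A \<or> C = B" "c \<in> C" "c' \<in> C" "e \<in> E" "c \<in> e" "c' \<in> e" for C c c' e
    using that AB(2,3) by fastforce
  show ?thesis
  proof (cases "card B \<le> card A")
    case True
    show ?thesis
      by (rule that[of A]) (use True card AB(1) indep[of A] in auto)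
  next
    case False
    show ?thesis
      by (rule that[of B]) (use False card AB(1) indep[of B] in auto)
  qed
qed

section \<open>Estimates\<close>

lemma power_one_minus_ge_exp:
  assumes "0 \<le> p" "p \<le> 1/2"
  shows "exp (- (real k * p) - 2 * (real k * p^2)) \<le> (1 - p) ^ k"
proof -
  have "real k * (- p - 2 * p^2) \<le> real k * ln (1 - p)"
    using ln_one_minus_pos_lower_bound[OF assms] by (intro mult_left_mono) auto
  then have "exp (- (real k * p) - 2 * (real k * p^2)) \<le> exp (real k * ln (1 - p))"
    by (simp add: algebra_simps)
  also have "\<dots> = (1 - p) ^ k"
    using assms by (simp add: exp_of_nat_mult)
  finally show ?thesis .
qed

lemma p1_p2_bounds:
  fixes n k :: nat
  defines "L \<equiv> ln (real n)" and "L4 \<equiv> ln (ln (ln (ln (real n))))"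
  assumes "1 \<le> L" "2 * L^2 \<le> real k" "0 < L4" "L4 \<le> L"
  shows "0 \<le> p1 n k" "p1 n k \<le> p2 n k" "0 < p2 n k" "p2 n k \<le> 1" "p1 n k \<le> 1/2"
    "real k * p1 n k ^ 2 \<le> 1/2"
proof -
  have "L \<le> L * L" using assms(3) mult_left_mono[of 1 L L] by simp
  then have k: "2 * L \<le> real k" "0 < real k"
    using assms(3,4) unfolding power2_eq_square by linarith+
  have p1: "p1 n k = (L - L4) / real k" and p2: "p2 n k = (L + L4) / real k"
    by (simp_all add: p1_def p2_def L_def L4_def)
  show "0 \<le> p1 n k" "0 < p2 n k"
    unfolding p1 p2 using assms(3,5,6) k(2) by simp_all
  show "p1 n k \<le> p2 n k"
    unfolding p1 p2 using assms(5) k(2) by (simp add: divide_right_mono)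
  show "p2 n k \<le> 1" "p1 n k \<le> 1/2"
    unfolding p1 p2 using assms(5,6) k by (simp_all add: pos_divide_le_eq)
  have "real k * p1 n k ^ 2 = (L - L4)^2 / real k"
    unfolding p1 using k by (simp add: power2_eq_square)
  also have "\<dots> \<le> L^2 / real k"
    using assms(5,6) k by (intro divide_right_mono power_mono) auto
  also have "\<dots> \<le> 1/2"
    using assms(4) k by (simp add: pos_divide_le_eq)
  finally show "real k * p1 n k ^ 2 \<le> 1/2" .
qed

lemma one_minus_power_p1_le_exp:
  fixes n k :: nat
  defines "L \<equiv> ln (real n)" and "L4 \<equiv> ln (ln (ln (ln (real n))))"
  assumes "1 \<le> L" "2 * L^2 \<le> real k" "0 < L4" "L4 \<le> L"
  shows "(1 - (1 - p1 n k) ^ k) ^ n \<le> exp (- exp (L4 - 1))"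
proof -
  note p = p1_p2_bounds[OF assms(3-6)[unfolded L_def L4_def], folded L_def L4_def]
  define x where "x = (1 - p1 n k) ^ k"
  have n: "0 < real n" using assms(3) L_def by (cases "n = 0") auto
  have "real k * p1 n k = L - L4"
    using p(3) by (auto simp: p1_def p2_def L_def L4_def)
  then have "L4 - L - 1 \<le> - (real k * p1 n k) - 2 * (real k * p1 n k ^ 2)"
    using p(6) by linarith
  then have "exp (L4 - L - 1) \<le> x"
    using power_one_minus_ge_exp[OF p(1,5), of k] unfolding x_def by (meson exp_le_cancel_iff order_trans)
  have "exp (L4 - 1) = exp L * exp (L4 - L - 1)" by (simp flip: exp_add)
  also have "exp L = real n" using n by (simp add: L_def)
  also have "real n * exp (L4 - L - 1) \<le> real n * x"
    using \<open>exp (L4 - L - 1) \<le> x\<close> n by simp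
  finally have nx: "exp (L4 - 1) \<le> real n * x" .
  have x: "0 \<le> x" "x \<le> 1" using p(1,5) unfolding x_def by (auto intro: power_le_one)
  have "(1 - x) ^ n \<le> exp (- x) ^ n"
    using x by (intro power_mono) (auto simp: exp_ge_add_one_self[of "-x", simplified])
  also have "\<dots> = exp (- (real n * x))" by (simp flip: exp_of_nat_mult)
  also have "\<dots> \<le> exp (- exp (L4 - 1))" using nx by simp
  finally show ?thesis unfolding x_def .
qed

lemma prob_GH_le_prob_hitting_graph_regular:
  fixes n k :: nat
  defines "L \<equiv> ln (real n)" and "L4 \<equiv> ln (ln (ln (ln (real n))))"
  assumes bip: "bipartite_graph {..<2*n} E" and reg: "regular_graph k {..<2*n} E"
    and mono: "mono_increasing E Q"
    and bounds: "1 \<le> L" "2 * L^2 \<le> real k" "0 < L4" "L4 \<le> L"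
  shows "measure_pmf.prob (GH n k {..<2*n} E) Q - exp (- exp (L4 - 1))
    \<le> measure_pmf.prob (graph_process E) {xs. hitting_graph {..<2*n} xs \<in> Q}"
proof -
  note p = p1_p2_bounds[OF bounds[unfolded L_def L4_def]]
  have "finite E" using regular_graph_edges(1)[OF reg] by (rule finite_subset) simp
  have "0 < k" using p(3) by (cases "k = 0") (simp_all add: p2_def)
  obtain C where C: "C \<subseteq> {..<2*n}" "card {..<2*n} \<le> 2 * card C"
    "\<And>c c' e. c \<in> C \<Longrightarrow> c' \<in> C \<Longrightarrow> e \<in> E \<Longrightarrow> c \<in> e \<Longrightarrow> c' \<in> e \<Longrightarrow> c = c'"
    by (rule bipartite_graph_large_side[OF bip finite_lessThan]) blast
  have deg: "card {e\<in>E. c \<in> e} = k" if "c \<in> C" for c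
    using reg C(1) that by (auto simp: regular_graph_def)
  have "measure_pmf.prob (GH n k {..<2*n} E) Q
      \<le> measure_pmf.prob (graph_process E) {xs. hitting_graph {..<2*n} xs \<in> Q}
        + measure_pmf.prob (random_subgraph E (p1 n k)) {H. no_isolated {..<2*n} H}"
    using \<open>finite E\<close> regular_graph_edges(2)[OF reg] no_isolated_if_regular[OF reg \<open>0 < k\<close>] mono p
    by (intro prob_GH_le_prob_hitting_graph) auto
  also have "measure_pmf.prob (random_subgraph E (p1 n k)) {H. no_isolated {..<2*n} H}
      \<le> (1 - (1 - p1 n k) ^ k) ^ card C"
  proof (rule prob_random_subgraph_no_isolated_le[OF \<open>finite E\<close> _ _ _ C(1) deg C(3)])
    show "0 \<le> p1 n k" "p1 n k \<le> 1" using p(1,5) by simp_all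
    show "finite C" using finite_subset[OF C(1)] by simp
  qed
  also have "\<dots> \<le> (1 - (1 - p1 n k) ^ k) ^ n"
    using p(1,5) C(2) by (intro power_decreasing) (simp_all add: power_le_one)
  also have "\<dots> \<le> exp (- exp (L4 - 1))"
    unfolding L4_def by (rule one_minus_power_p1_le_exp[OF bounds[unfolded L_def L4_def]])
  finally show ?thesis by simp
qed

lemma eventually_degree_ge_log_squared:
  fixes k :: "nat \<Rightarrow> nat"
  assumes "filterlim (\<lambda>n. (real (k n) / real n) * ln (real n) powr (1/3)) at_top sequentially"
  shows "eventually (\<lambda>n. 2 * ln (real n) ^ 2 \<le> real (k n)) sequentially"
proof -
  have "eventually (\<lambda>n. 1 \<le> (real (k n) / real n) * ln (real n) powr (1/3)) sequentially"
    using assms by (simp add: filterlim_at_top)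
  moreover have "eventually (\<lambda>n::nat. 2 * ln (real n) ^ 2 * ln (real n) powr (1/3) \<le> real n) sequentially"
    by real_asymp
  moreover have "eventually (\<lambda>n::nat. 1 < ln (real n)) sequentially"
    by real_asymp
  ultimately show ?thesis
  proof eventually_elim
    case (elim n)
    define c where "c = ln (real n) powr (1/3)"
    have "0 < c" "0 < real n" using elim(3) by (auto simp: c_def intro: ccontr)
    then have "real n \<le> real (k n) * c" using elim(1) by (simp add: c_def field_simps)
    then have "2 * ln (real n) ^ 2 * c \<le> real (k n) * c" using elim(2) by (simp add: c_def)
    then show ?case using \<open>0 < c\<close> by simp
  qed
qed

theorem claim3p1:
  fixes k :: "nat \<Rightarrow> nat"
    and G :: "nat \<Rightarrow> nat set set"
    and Q :: "nat \<Rightarrow> nat set set set"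
  assumes delta: "filterlim (\<lambda>n. (real (k n) / real n) * ln (real n) powr (1/3)) at_top sequentially"
    and graph: "\<And>n. bipartite_graph {..<2*n} (G n) \<and> regular_graph (k n) {..<2*n} (G n)"
    and mono: "\<And>n. mono_increasing (G n) (Q n)"
    and GH_aas: "(\<lambda>n. measure_pmf.prob (GH n (k n) {..<2*n} (G n)) (Q n)) \<longlonglongrightarrow> 1"
  shows "(\<lambda>n. measure_pmf.prob (graph_process (G n))
            {xs. hitting_graph {..<2*n} xs \<in> Q n}) \<longlonglongrightarrow> 1"
proof (rule tendsto_sandwich[where h = "\<lambda>_. 1"])
  define err where "err n = exp (- exp (ln (ln (ln (ln (real n)))) - 1))" for n :: nat
  have "eventually (\<lambda>n::nat. 1 \<le> ln (real n)) sequentially"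
    "eventually (\<lambda>n::nat. 0 < ln (ln (ln (ln (real n))))) sequentially"
    "eventually (\<lambda>n::nat. ln (ln (ln (ln (real n)))) \<le> ln (real n)) sequentially"
    by real_asymp+
  with eventually_degree_ge_log_squared[OF delta]
  show "eventually (\<lambda>n. measure_pmf.prob (GH n (k n) {..<2*n} (G n)) (Q n) - err n
      \<le> measure_pmf.prob (graph_process (G n)) {xs. hitting_graph {..<2*n} xs \<in> Q n}) sequentially"
    unfolding err_def
  proof eventually_elim
    case (elim n)
    show ?case
      using prob_GH_le_prob_hitting_graph_regular[OF graph[THEN conjunct1] graph[THEN conjunct2] mono
        elim(2,1,3,4)] .
  qed
  have "err \<longlonglongrightarrow> 0" unfolding err_def by real_asymp
  from tendsto_diff[OF GH_aas this]
  show "(\<lambda>n. measure_pmf.prob (GH n (k n) {..<2*n} (G n)) (Q n) - err n) \<longlonglongrightarrow> 1"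
    by simp
qed simp_all

end
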